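(* Let $F\in\mathbb{R}[x]$ be non-constant, $s\ge5$ an integer, $\alpha,\beta\in\mathbb{R}$ with $\alpha\ne0$, and $Q=F\circ T_s\circ(\alpha x+\beta)$, with $n=\deg Q$. 1) If $Ch_2(Q)=Ch_3(Q)=0$, then either $\alpha=\pm1$ and $\beta=0$, or $$4\beta^2=\frac{6}{(n-1)(2n-1)},\qquad \alpha^2=\frac{2n-4}{2n-1}.$$ 2) If $Ch_2(Q)=Ch_4(Q)=0$, then either $\alpha=\pm1$ and $\beta=0$, or $$4\beta^2=\frac{12}{(n-1)(2n-1)},\qquad \alpha^2=\frac{2n-7}{2n-1}.$$ In particular, in both cases, unless $\alpha=\pm1$ and $\beta=0$, one has $\alpha^2<1$ and $\beta\ne0$.
   Context: $T_k$ denotes the Chebyshev polynomial of the first kind of degree $k$, $T_k(\cos\phi)=\cos(k\phi)$. Every real polynomial $Q$ of degree $n$ can be uniquely written as $Q=\sum_{k=0}^n d_kT_k$ with $d_k\in\mathbb{R}$; set $Ch_i(Q)=d_{n-i}$ for $0\le i\le n$. $\circ$ denotes composition. *)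

theory Defs
  imports "HOL-Computational_Algebra.Polynomial" Complex_Main
begin

fun cheb :: "nat \<Rightarrow> real poly" where
  "cheb 0 = 1"
| "cheb (Suc 0) = [:0, 1:]"
| "cheb (Suc (Suc k)) = [:0, 2:] * cheb (Suc k) - cheb k"

definition cheb_coeffs :: "real poly \<Rightarrow> nat \<Rightarrow> real" where
  "cheb_coeffs Q = (THE d. (\<forall>k>degree Q. d k = 0) \<and>
                          Q = (\<Sum>k\<le>degree Q. smult (d k) (cheb k)))"

definition Ch :: "nat \<Rightarrow> real poly \<Rightarrow> real" where
  "Ch i Q = cheb_coeffs Q (degree Q - i)"

end

theory Submission
  imports Defs
begin

(*
  Let Q = F \<circ> T_s \<circ> (\<alpha> x + \<beta>), n = degree Q = s * degree F.  The proof compares the five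
  top coefficients of Q in the monomial basis with its five top Chebyshev coefficients.

  Every polynomial has a unique expansion
     in the T_k, so Ch_i is well defined; the monomial coefficients of degree n, ..., n-4
     are explicit combinations of Ch_0, ..., Ch_4 (top_coeffs_via_Ch), which turns Ch_2 = 0,
     Ch_3 = 0, Ch_4 = 0 into linear relations among top monomial coefficients.
  2. Top coefficients of compositions: those of F \<circ> T_s are lead_coeff F times those of
     T_s^(degree F), computed via the reversed polynomial; they have the shape
     g (1, 0, -n/4, 0, n(n-3)/32).
*)

lemma coeff_cheb_rec:
  "coeff (cheb (Suc (Suc k))) (Suc j) = 2 * coeff (cheb (Suc k)) j - coeff (cheb k) (Suc j)"
  "coeff (cheb (Suc (Suc k))) 0 = - coeff (cheb k) 0"
  by (simp_all add: coeff_pCons mult.commute[of _ "cheb _"])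

lemma cheb_degree_lead:
  "degree (cheb k) = k \<and> coeff (cheb k) k = (if k = 0 then 1 else 2 ^ (k - 1))"
proof (induction k rule: cheb.induct)
  case 1
  then show ?case by simp
next
  case 2
  then show ?case by simp
next
  case (3 k)
  have "cheb (Suc k) \<noteq> 0" using 3 by (metis degree_0 nat.distinct(1))
  then have deg_x_T: "degree ([:0, 2:] * cheb (Suc k)) = Suc (Suc k)"
    using 3 by (simp add: degree_mult_eq)
  have lead_x_T: "coeff ([:0, 2:] * cheb (Suc k)) (Suc (Suc k)) = 2 ^ Suc k"
    using 3 by (simp add: coeff_pCons)
  have "degree (cheb k) < Suc (Suc k)" using 3 by simp
  then have "degree ([:0, 2:] * cheb (Suc k) - cheb k) = Suc (Suc k)"
    using deg_x_T degree_add_eq_left[of "- cheb k" "[:0, 2:] * cheb (Suc k)"] by simp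
  moreover have "coeff (cheb k) (Suc (Suc k)) = 0" using 3 by (simp add: coeff_eq_0)
  ultimately show ?case using lead_x_T by simp
qed

lemma cheb_degree [simp]: "degree (cheb k) = k"
  using cheb_degree_lead by blast

lemma cheb_lead: "coeff (cheb (Suc k)) (Suc k) = 2 ^ k"
  using cheb_degree_lead[of "Suc k"] by simp

lemma cheb_parity: "odd (k + j) \<Longrightarrow> coeff (cheb k) j = 0"
proof (induction k arbitrary: j rule: cheb.induct)
  case 1
  then show ?case by (cases j) auto
next
  case 2
  then show ?case by (cases j) (auto simp: coeff_pCons odd_pos split: nat.splits)
next
  case (3 k)
  then show ?case by (cases j) (simp_all add: coeff_cheb_rec)
qed

lemma coeff_cheb_sub_odd:
  "coeff (cheb (k + 1)) k = 0"
  "coeff (cheb (k + 3)) k = 0"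
  by (simp_all add: cheb_parity)

lemma coeff_cheb_sub2: "coeff (cheb (k + 2)) k = - real (k + 2) * 2 ^ k / 2"
proof (induction k rule: less_induct)
  case (less k)
  consider "k = 0" | "k = 1" | j where "k = j + 2"
    by (metis One_nat_def add_2_eq_Suc' not0_implies_Suc)
  then show ?case
  proof cases
    case 3
    have "coeff (cheb (k + 2)) k = 2 * coeff (cheb (j + 3)) (j + 1) - coeff (cheb (j + 2)) (j + 2)"
      using coeff_cheb_rec(1)[of "j + 2" "j + 1"] 3 by (simp add: eval_nat_numeral)
    also have "coeff (cheb (j + 3)) (j + 1) = - real (j + 3) * 2 ^ (j + 1) / 2"
      using less[of "j + 1"] 3 by (simp add: eval_nat_numeral)
    also have "coeff (cheb (j + 2)) (j + 2) = 2 ^ (j + 1)"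
      using cheb_lead[of "j + 1"] by (simp add: eval_nat_numeral)
    finally show ?thesis using 3 by (simp add: field_simps)
  qed (simp_all add: eval_nat_numeral coeff_pCons)
qed

lemma coeff_cheb_sub4: "coeff (cheb (k + 4)) k = real (k + 4) * real (k + 1) * 2 ^ k / 4"
proof (induction k rule: less_induct)
  case (less k)
  consider "k = 0" | "k = 1" | j where "k = j + 2"
    by (metis One_nat_def add_2_eq_Suc' not0_implies_Suc)
  then show ?case
  proof cases
    case 3
    have "coeff (cheb (k + 4)) k = 2 * coeff (cheb (j + 5)) (j + 1) - coeff (cheb (j + 4)) (j + 2)"
      using coeff_cheb_rec(1)[of "j + 4" "j + 1"] 3 by (simp add: eval_nat_numeral)
    also have "coeff (cheb (j + 5)) (j + 1) = real (j + 5) * real (j + 2) * 2 ^ (j + 1) / 4"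
      using less[of "j + 1"] 3 by (simp add: eval_nat_numeral)
    also have "coeff (cheb (j + 4)) (j + 2) = - real (j + 4) * 2 ^ (j + 2) / 2"
      using coeff_cheb_sub2[of "j + 2"] by (simp add: eval_nat_numeral)
    finally show ?thesis using 3 by (simp add: field_simps)
  qed (simp_all add: eval_nat_numeral coeff_pCons)
qed

(* Existence of the Chebyshev expansion: subtract a multiple of T_(degree Q) to kill the
   leading coefficient and induct on the degree. *)
lemma cheb_expansion_exists:
  "\<exists>d. (\<forall>k>degree Q. d k = 0) \<and> Q = (\<Sum>k\<le>degree Q. smult (d k) (cheb k))"
proof (induction "degree Q" arbitrary: Q rule: less_induct)
  case less
  show ?case
  proof (cases "degree Q = 0")
    case True
    then obtain c where Qc: "Q = [:c:]" by (metis degree_eq_zeroE)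
    show ?thesis
      by (rule exI[of _ "\<lambda>k. if k = 0 then c else 0"]) (simp add: True Qc)
  next
    case False
    define m where "m = degree Q"
    define c where "c = coeff Q m / 2 ^ (m - 1)"
    define Q' where "Q' = Q - smult c (cheb m)"
    have "coeff (cheb m) m = 2 ^ (m - 1)" using False cheb_degree_lead[of m] m_def by simp
    then have "coeff Q' m = 0" by (simp add: Q'_def c_def)
    moreover have "degree Q' \<le> m" unfolding Q'_def m_def
      by (rule degree_diff_le) (auto intro: order.trans[OF degree_smult_le])
    ultimately have dQ': "degree Q' < m"
      using False m_def by (metis antisym_conv1 degree_0 leading_coeff_0_iff)
    then obtain d' where d': "\<forall>k>degree Q'. d' k = 0"
        "Q' = (\<Sum>k\<le>degree Q'. smult (d' k) (cheb k))"
      using less m_def by blast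
    define d where "d = d'(m := c)"
    have "(\<Sum>k\<le>m. smult (d k) (cheb k)) = (\<Sum>k<m. smult (d' k) (cheb k)) + smult c (cheb m)"
      by (simp add: lessThan_Suc_atMost[symmetric] d_def)
    also have "(\<Sum>k<m. smult (d' k) (cheb k)) = (\<Sum>k\<le>degree Q'. smult (d' k) (cheb k))"
      by (rule sum.mono_neutral_right) (use d' dQ' in auto)
    also have "\<dots> = Q'" by (fact d'(2)[symmetric])
    finally have "Q = (\<Sum>k\<le>m. smult (d k) (cheb k))" by (simp add: Q'_def)
    moreover have "\<forall>k>m. d k = 0" using d' dQ' by (auto simp: d_def)
    ultimately show ?thesis unfolding m_def by blast
  qed
qed

(* Linear independence of the T_k: compare leading coefficients. *)
lemma cheb_independent:
  "(\<Sum>k\<le>N. smult (f k) (cheb k)) = 0 \<Longrightarrow> k \<le> N \<Longrightarrow> f k = 0"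
proof (induction N arbitrary: k)
  case 0
  then show ?case by simp
next
  case (Suc N)
  have "0 = coeff (\<Sum>k\<le>Suc N. smult (f k) (cheb k)) (Suc N)"
    using Suc.prems(1) by (simp only: coeff_0)
  also have "\<dots> = (\<Sum>k\<le>N. f k * coeff (cheb k) (Suc N)) + f (Suc N) * coeff (cheb (Suc N)) (Suc N)"
    by (simp add: coeff_sum)
  also have "(\<Sum>k\<le>N. f k * coeff (cheb k) (Suc N)) = 0"
    by (rule sum.neutral) (auto simp: coeff_eq_0)
  finally have fN: "f (Suc N) = 0" by (simp add: cheb_lead)
  then have "(\<Sum>k\<le>N. smult (f k) (cheb k)) = 0" using Suc.prems by simp
  then show ?case using Suc fN by (cases "k = Suc N") auto
qed

lemma cheb_coeffs_expansion:
  "(\<forall>k>degree Q. cheb_coeffs Q k = 0) \<and> Q = (\<Sum>k\<le>degree Q. smult (cheb_coeffs Q k) (cheb k))"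
proof -
  have "\<exists>!d. (\<forall>k>degree Q. d k = 0) \<and> Q = (\<Sum>k\<le>degree Q. smult (d k) (cheb k))"
  proof (rule ex_ex1I)
    show "\<exists>d. (\<forall>k>degree Q. d k = 0) \<and> Q = (\<Sum>k\<le>degree Q. smult (d k) (cheb k))"
      by (rule cheb_expansion_exists)
  next
    fix d e
    assume d: "(\<forall>k>degree Q. d k = 0) \<and> Q = (\<Sum>k\<le>degree Q. smult (d k) (cheb k))"
       and e: "(\<forall>k>degree Q. e k = 0) \<and> Q = (\<Sum>k\<le>degree Q. smult (e k) (cheb k))"
    have "(\<Sum>k\<le>degree Q. smult (d k - e k) (cheb k)) = 0"
      using d e by (simp add: smult_diff_left sum_subtractf)
    then have "\<And>k. k \<le> degree Q \<Longrightarrow> d k - e k = 0" by (rule cheb_independent)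
    then show "d = e" using d e by (metis eq_iff_diff_eq_0 not_le ext)
  qed
  then show ?thesis unfolding cheb_coeffs_def by (rule theI')
qed

lemma coeff_via_cheb_coeffs:
  "coeff Q j = (\<Sum>k=j..degree Q. cheb_coeffs Q k * coeff (cheb k) j)"
proof -
  have "coeff Q j = coeff (\<Sum>k\<le>degree Q. smult (cheb_coeffs Q k) (cheb k)) j"
    using cheb_coeffs_expansion[of Q] by metis
  also have "\<dots> = (\<Sum>k\<le>degree Q. cheb_coeffs Q k * coeff (cheb k) j)"
    by (simp add: coeff_sum)
  also have "\<dots> = (\<Sum>k=j..degree Q. cheb_coeffs Q k * coeff (cheb k) j)"
    by (rule sum.mono_neutral_right) (auto simp: coeff_eq_0)
  finally show ?thesis .
qed

lemma sum_top_indices: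
  fixes f :: "nat \<Rightarrow> 'a::comm_monoid_add"
  shows "(\<Sum>k=m+5..m+5. f k) = f (m + 5)"
    and "(\<Sum>k=m+4..m+5. f k) = f (m + 4) + f (m + 5)"
    and "(\<Sum>k=m+3..m+5. f k) = f (m + 3) + f (m + 4) + f (m + 5)"
    and "(\<Sum>k=m+2..m+5. f k) = f (m + 2) + f (m + 3) + f (m + 4) + f (m + 5)"
    and "(\<Sum>k=m+1..m+5. f k) = f (m + 1) + f (m + 2) + f (m + 3) + f (m + 4) + f (m + 5)"
  by (simp_all add: sum.atLeast_Suc_atMost eval_nat_numeral add.assoc)

lemma cheb_top_values:
  fixes m :: nat
  shows "coeff (cheb (m + 1)) (m + 1) = 2 ^ m" and "coeff (cheb (m + 2)) (m + 2) = 2 ^ (m + 1)"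
    and "coeff (cheb (m + 3)) (m + 3) = 2 ^ (m + 2)" and "coeff (cheb (m + 4)) (m + 4) = 2 ^ (m + 3)"
    and "coeff (cheb (m + 5)) (m + 5) = 2 ^ (m + 4)"
    and "coeff (cheb (m + 2)) (m + 1) = 0" and "coeff (cheb (m + 3)) (m + 2) = 0"
    and "coeff (cheb (m + 4)) (m + 3) = 0" and "coeff (cheb (m + 5)) (m + 4) = 0"
    and "coeff (cheb (m + 4)) (m + 1) = 0" and "coeff (cheb (m + 5)) (m + 2) = 0"
    and "coeff (cheb (m + 3)) (m + 1) = - real (m + 3) * 2 ^ (m + 1) / 2"
    and "coeff (cheb (m + 4)) (m + 2) = - real (m + 4) * 2 ^ (m + 2) / 2"
    and "coeff (cheb (m + 5)) (m + 3) = - real (m + 5) * 2 ^ (m + 3) / 2"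
    and "coeff (cheb (m + 5)) (m + 1) = real (m + 5) * real (m + 2) * 2 ^ (m + 1) / 4"
  using cheb_lead[of m] cheb_lead[of "m + 1"] cheb_lead[of "m + 2"] cheb_lead[of "m + 3"]
    cheb_lead[of "m + 4"] coeff_cheb_sub2[of "m + 1"] coeff_cheb_sub2[of "m + 2"]
    coeff_cheb_sub2[of "m + 3"] coeff_cheb_sub4[of "m + 1"]
    coeff_cheb_sub_odd(1)[of "m + 1"] coeff_cheb_sub_odd(1)[of "m + 2"]
    coeff_cheb_sub_odd(1)[of "m + 3"] coeff_cheb_sub_odd(1)[of "m + 4"]
    coeff_cheb_sub_odd(2)[of "m + 1"] coeff_cheb_sub_odd(2)[of "m + 2"]
  by (simp_all del: cheb.simps add: eval_nat_numeral)

lemma top_coeffs_via_Ch: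
  fixes Q :: "real poly"
  assumes dQ: "degree Q = m + 5"
  shows "coeff Q (m + 5) = Ch 0 Q * 2 ^ (m + 4)"
    and "coeff Q (m + 4) = Ch 1 Q * 2 ^ (m + 3)"
    and "coeff Q (m + 3) = Ch 2 Q * 2 ^ (m + 2) - Ch 0 Q * real (m + 5) * 2 ^ (m + 3) / 2"
    and "coeff Q (m + 2) = Ch 3 Q * 2 ^ (m + 1) - Ch 1 Q * real (m + 4) * 2 ^ (m + 2) / 2"
    and "coeff Q (m + 1) = Ch 4 Q * 2 ^ m - Ch 2 Q * real (m + 3) * 2 ^ (m + 1) / 2
           + Ch 0 Q * real (m + 5) * real (m + 2) * 2 ^ (m + 1) / 4"
  unfolding coeff_via_cheb_coeffs[of Q] dQ sum_top_indices cheb_top_values Ch_def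
  by (simp_all add: field_simps)

lemma Ch_vanishing:
  fixes Q :: "real poly" and m :: nat
  defines "N \<equiv> real (m + 5)"
  assumes dQ: "degree Q = m + 5"
  shows "Ch 2 Q = 0 \<Longrightarrow> 4 * coeff Q (m + 3) + N * coeff Q (m + 5) = 0"
    and "Ch 3 Q = 0 \<Longrightarrow> 4 * coeff Q (m + 2) + (N - 1) * coeff Q (m + 4) = 0"
    and "Ch 2 Q = 0 \<Longrightarrow> Ch 4 Q = 0 \<Longrightarrow>
           32 * coeff Q (m + 1) = N * (N - 3) * coeff Q (m + 5)"
  using top_coeffs_via_Ch[OF dQ] by (simp_all add: N_def power_add algebra_simps)

lemma pcompose_monom: "pcompose (monom c k) q = smult c (q ^ k)"
  by (induction k) (simp_all add: monom_Suc pcompose_pCons monom_0)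

lemma coeff_pcompose_sum:
  fixes p q :: "'a::comm_semiring_1 poly"
  shows "coeff (pcompose p q) i = (\<Sum>k\<le>degree p. coeff p k * coeff (q ^ k) i)"
proof -
  have "pcompose p q = (\<Sum>k\<le>degree p. smult (coeff p k) (q ^ k))"
    by (subst (1) poly_as_sum_of_monoms[symmetric]) (simp add: pcompose_sum pcompose_monom)
  then show ?thesis by (simp add: coeff_sum)
qed

(* The coefficients of p \<circ> q just below the top degree only see the leading term of p:
   lower terms of p contribute degree at most (degree p - 1) * degree q. *)
lemma coeff_pcompose_top:
  fixes p q :: "'a::comm_semiring_1 poly"
  assumes j: "j < degree q"
  shows "coeff (pcompose p q) (degree p * degree q - j)
           = lead_coeff p * coeff (q ^ degree p) (degree p * degree q - j)"
proof -
  define D where "D = degree p"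
  have low: "coeff (q ^ k) (D * degree q - j) = 0" if "k < D" for k
  proof (rule coeff_eq_0)
    have "degree (q ^ k) \<le> k * degree q"
      using degree_power_le[of q k] by (simp add: mult.commute)
    moreover have "k * degree q + degree q \<le> D * degree q"
      using that by (metis Suc_leI add.commute mult_Suc mult_le_mono1)
    ultimately show "degree (q ^ k) < D * degree q - j" using j by linarith
  qed
  have "coeff (pcompose p q) (D * degree q - j)
          = (\<Sum>k<D. coeff p k * coeff (q ^ k) (D * degree q - j))
            + coeff p D * coeff (q ^ D) (D * degree q - j)"
    by (simp add: coeff_pcompose_sum D_def lessThan_Suc_atMost[symmetric])
  also have "(\<Sum>k<D. coeff p k * coeff (q ^ k) (D * degree q - j)) = 0"
    using low by simp
  finally show ?thesis by (simp add: D_def)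
qed

lemma coeff_pcompose_linear_poly:
  fixes p :: "'a::comm_semiring_1 poly"
  shows "coeff (pcompose p [:b, a:]) i
           = (\<Sum>k=i..degree p. coeff p k * (of_nat (k choose i) * a ^ i * b ^ (k - i)))"
proof -
  have low: "coeff ([:b, a:] ^ k) i = 0" if "k < i" for k
  proof (rule coeff_eq_0)
    have "degree ([:b, a:] ^ k) \<le> degree [:b, a:] * k" by (rule degree_power_le)
    also have "\<dots> \<le> k" by simp
    finally show "degree ([:b, a:] ^ k) < i" using that by linarith
  qed
  have "coeff (pcompose p [:b, a:]) i = (\<Sum>k\<le>degree p. coeff p k * coeff ([:b, a:] ^ k) i)"
    by (rule coeff_pcompose_sum)
  also have "\<dots> = (\<Sum>k=i..degree p. coeff p k * coeff ([:b, a:] ^ k) i)"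
    by (rule sum.mono_neutral_right) (auto simp: low)
  also have "\<dots> = (\<Sum>k=i..degree p. coeff p k * (of_nat (k choose i) * a ^ i * b ^ (k - i)))"
    by (rule sum.cong) (simp_all add: coeff_linear_poly_power)
  finally show ?thesis .
qed

lemma real_choose_small:
  "real (n choose 1) = real n"
  "real (n choose 2) = real n * (real n - 1) / 2"
  "real (n choose 3) = real n * (real n - 1) * (real n - 2) / 6"
  "real (n choose 4) = real n * (real n - 1) * (real n - 2) * (real n - 3) / 24"
  by (simp_all add: binomial_gbinomial gbinomial_prod_rev eval_nat_numeral)

lemma coeff_power_top_reflect:
  fixes p :: "'a::idom poly"
  assumes "p \<noteq> 0" and "j \<le> d * degree p"
  shows "coeff (p ^ d) (d * degree p - j) = coeff (reflect_poly p ^ d) j"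
  using assms by (simp add: reflect_poly_power[symmetric] coeff_reflect_poly degree_power_eq)

lemma reflect_cheb_low_coeffs:
  assumes "s \<ge> 4"
  shows "coeff (reflect_poly (cheb s)) 0 = 2 ^ (s - 1)"
    and "coeff (reflect_poly (cheb s)) 1 = 0"
    and "coeff (reflect_poly (cheb s)) 2 = - real s * 2 ^ (s - 1) / 4"
    and "coeff (reflect_poly (cheb s)) 3 = 0"
    and "coeff (reflect_poly (cheb s)) 4 = real s * (real s - 3) * 2 ^ (s - 1) / 32"
proof -
  obtain t where t: "s = t + 4" using assms by (metis le_add_diff_inverse2)
  have c: "coeff (reflect_poly (cheb s)) j = coeff (cheb (t + 4)) (t + 4 - j)" if "j \<le> 4" for j
    using that t by (simp add: coeff_reflect_poly)
  show "coeff (reflect_poly (cheb s)) 0 = 2 ^ (s - 1)"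
    using c[of 0] cheb_lead[of "t + 3"] t by (simp add: eval_nat_numeral)
  show "coeff (reflect_poly (cheb s)) 1 = 0"
    using c[of 1] coeff_cheb_sub_odd(1)[of "t + 3"] by (simp add: add_ac)
  show "coeff (reflect_poly (cheb s)) 2 = - real s * 2 ^ (s - 1) / 4"
    using c[of 2] coeff_cheb_sub2[of "t + 2"] t by (simp add: eval_nat_numeral power_add)
  show "coeff (reflect_poly (cheb s)) 3 = 0"
    using c[of 3] coeff_cheb_sub_odd(2)[of "t + 1"] by (simp add: add_ac)
  show "coeff (reflect_poly (cheb s)) 4 = real s * (real s - 3) * 2 ^ (s - 1) / 32"
    using c[of 4] coeff_cheb_sub4[of t] t by (simp add: eval_nat_numeral power_add)
qed

(* If A = a (1 - s x^2/4 + s(s-3) x^4/32 + O(x^5)) then A^d has the same shape with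
   s replaced by d s; this is the shape of the reversed Chebyshev polynomial. *)
lemma low_coeffs_power:
  fixes A :: "real poly" and a s :: real
  assumes A0: "coeff A 0 = a" and A1: "coeff A 1 = 0" and A2: "coeff A 2 = - s * a / 4"
    and A3: "coeff A 3 = 0" and A4: "coeff A 4 = s * (s - 3) * a / 32"
  shows "coeff (A ^ d) 0 = a ^ d \<and> coeff (A ^ d) 1 = 0
     \<and> coeff (A ^ d) 2 = - (real d * s) * a ^ d / 4 \<and> coeff (A ^ d) 3 = 0
     \<and> coeff (A ^ d) 4 = (real d * s) * (real d * s - 3) * a ^ d / 32"
proof (induction d)
  case 0
  then show ?case by simp
next
  case (Suc d)
  have mult_low: "coeff (A * B) 0 = coeff A 0 * coeff B 0"
    "coeff (A * B) 1 = coeff A 0 * coeff B 1 + coeff A 1 * coeff B 0"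
    "coeff (A * B) 2 = coeff A 0 * coeff B 2 + coeff A 1 * coeff B 1 + coeff A 2 * coeff B 0"
    "coeff (A * B) 3 = coeff A 0 * coeff B 3 + coeff A 1 * coeff B 2 + coeff A 2 * coeff B 1
       + coeff A 3 * coeff B 0"
    "coeff (A * B) 4 = coeff A 0 * coeff B 4 + coeff A 1 * coeff B 3 + coeff A 2 * coeff B 2
       + coeff A 3 * coeff B 1 + coeff A 4 * coeff B 0" for B
    by (simp_all add: coeff_mult eval_nat_numeral)
  from Suc.IH show ?case
    by (simp only: power_Suc mult_low A0 A1 A2 A3 A4)
      (simp add: of_nat_Suc; simp add: field_simps; algebra)
qed

(* The five top coefficients of G = F \<circ> T_s (for s \<ge> 5): they are those of
   lead_coeff F * T_s^(degree F), hence of the shape given by the previous lemma. *)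
lemma top_coeffs_pcompose_cheb:
  fixes F :: "real poly" and s m :: nat
  defines "G \<equiv> pcompose F (cheb s)"
  assumes s: "s \<ge> 5" and dG: "degree G = m + 5"
  defines "N \<equiv> real (m + 5)" and "g \<equiv> lead_coeff F * 2 ^ ((s - 1) * degree F)"
  shows "coeff G (m + 5) = g" and "coeff G (m + 4) = 0" and "coeff G (m + 3) = - N * g / 4"
    and "coeff G (m + 2) = 0" and "coeff G (m + 1) = N * (N - 3) * g / 32"
proof -
  define D where "D = degree F"
  define A where "A = reflect_poly (cheb s)"
  have nDs: "m + 5 = D * s" using dG by (simp add: G_def degree_pcompose D_def)
  have top: "coeff G (m + 5 - j) = lead_coeff F * coeff (A ^ D) j" if "j \<le> 4" for j
  proof -
    have "coeff G (D * s - j) = lead_coeff F * coeff (cheb s ^ D) (D * s - j)"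
      using coeff_pcompose_top[of j "cheb s" F] that s by (simp add: G_def D_def)
    also have "coeff (cheb s ^ D) (D * s - j) = coeff (A ^ D) j"
    proof -
      have "cheb s \<noteq> 0" using s by (metis cheb_degree degree_0 not_numeral_le_zero)
      moreover have "j \<le> D * s" using that nDs by linarith
      ultimately show ?thesis using coeff_power_top_reflect[of "cheb s" j D] by (simp add: A_def)
    qed
    finally show ?thesis using nDs by simp
  qed
  have "s \<ge> 4" using s by simp
  note low = low_coeffs_power[OF reflect_cheb_low_coeffs[OF this], of D, folded A_def]
  have ND: "real D * real s = N" using nDs by (simp add: N_def)
  define a where "a = (2 :: real) ^ (s - 1)"
  have g: "g = lead_coeff F * a ^ D" by (simp add: g_def D_def a_def power_mult)
  have low': "coeff (A ^ D) 0 = a ^ D" "coeff (A ^ D) 1 = 0" "coeff (A ^ D) 2 = - N * a ^ D / 4"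
    "coeff (A ^ D) 3 = 0" "coeff (A ^ D) 4 = N * (N - 3) * a ^ D / 32"
    using low unfolding ND a_def by auto
  show "coeff G (m + 5) = g" "coeff G (m + 4) = 0" "coeff G (m + 3) = - N * g / 4"
    "coeff G (m + 2) = 0" "coeff G (m + 1) = N * (N - 3) * g / 32"
    using top[of 0] top[of 1] top[of 2] top[of 3] top[of 4] unfolding low' g
    by (simp_all add: add_ac eval_nat_numeral)
qed

lemma top_binomials:
  fixes m :: nat
  defines "N \<equiv> real (m + 5)"
  shows "real ((m + 5) choose (m + 4)) = N"
    and "real ((m + 5) choose (m + 3)) = N * (N - 1) / 2"
    and "real ((m + 5) choose (m + 2)) = N * (N - 1) * (N - 2) / 6"
    and "real ((m + 5) choose (m + 1)) = N * (N - 1) * (N - 2) * (N - 3) / 24"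
    and "real ((m + 3) choose (m + 2)) = N - 2"
    and "real ((m + 3) choose (m + 1)) = (N - 2) * (N - 3) / 2"
  unfolding N_def
  by (subst binomial_symmetric; simp add: real_choose_small; simp add: algebra_simps)+

lemma top_coeffs_pcompose_linear:
  fixes G :: "real poly" and g a b :: real and m :: nat
  defines "N \<equiv> real (m + 5)"
  assumes dG: "degree G = m + 5" and G0: "coeff G (m + 5) = g" and G1: "coeff G (m + 4) = 0"
    and G2: "coeff G (m + 3) = - N * g / 4" and G3: "coeff G (m + 2) = 0"
    and G4: "coeff G (m + 1) = N * (N - 3) * g / 32"
  shows "coeff (pcompose G [:b, a:]) (m + 5) = g * a ^ (m + 5)"
    and "coeff (pcompose G [:b, a:]) (m + 4) = g * a ^ (m + 4) * (N * b)"
    and "coeff (pcompose G [:b, a:]) (m + 3) = g * a ^ (m + 3) * (N * (N - 1) / 2 * b^2 - N / 4)"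
    and "coeff (pcompose G [:b, a:]) (m + 2)
           = g * a ^ (m + 2) * (N * (N - 1) * (N - 2) / 6 * b^3 - N * (N - 2) / 4 * b)"
    and "coeff (pcompose G [:b, a:]) (m + 1) = g * a ^ (m + 1) *
           (N * (N - 1) * (N - 2) * (N - 3) / 24 * b^4 - N * (N - 2) * (N - 3) / 8 * b^2
            + N * (N - 3) / 32)"
  unfolding coeff_pcompose_linear_poly dG sum_top_indices G0 G1 G2 G3 G4
    top_binomials[of m, folded N_def]
  by (simp_all; simp add: field_simps)+

lemma degree_cheb_composition_ge:
  fixes F :: "real poly"
  assumes "\<alpha> \<noteq> 0" and "degree F \<ge> 1"
  shows "degree (pcompose F (pcompose (cheb s) [:\<beta>, \<alpha>:])) \<ge> s"
proof -
  have "degree (pcompose F (pcompose (cheb s) [:\<beta>, \<alpha>:])) = degree F * s"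
    using assms(1) by (simp add: degree_pcompose)
  moreover have "1 * s \<le> degree F * s" using assms(2) by (intro mult_le_mono1)
  ultimately show ?thesis by simp
qed

lemma top_coeffs_cheb_composition:
  fixes F :: "real poly" and s m :: nat and \<alpha> \<beta> :: real
  defines "Q \<equiv> pcompose F (pcompose (cheb s) [:\<beta>, \<alpha>:])" and "N \<equiv> real (m + 5)"
  assumes s: "s \<ge> 5" and \<alpha>: "\<alpha> \<noteq> 0" and dQ: "degree Q = m + 5"
  obtains g where "g \<noteq> 0"
    and "coeff Q (m + 5) = g * \<alpha> ^ (m + 5)"
    and "coeff Q (m + 4) = g * \<alpha> ^ (m + 4) * (N * \<beta>)"
    and "coeff Q (m + 3) = g * \<alpha> ^ (m + 3) * (N * (N - 1) / 2 * \<beta>^2 - N / 4)"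
    and "coeff Q (m + 2)
           = g * \<alpha> ^ (m + 2) * (N * (N - 1) * (N - 2) / 6 * \<beta>^3 - N * (N - 2) / 4 * \<beta>)"
    and "coeff Q (m + 1) = g * \<alpha> ^ (m + 1) *
           (N * (N - 1) * (N - 2) * (N - 3) / 24 * \<beta>^4 - N * (N - 2) * (N - 3) / 8 * \<beta>^2
            + N * (N - 3) / 32)"
proof -
  define G where "G = pcompose F (cheb s)"
  have QG: "Q = pcompose G [:\<beta>, \<alpha>:]" by (simp add: Q_def G_def pcompose_assoc)
  have dG: "degree G = m + 5" using dQ \<alpha> by (simp add: QG degree_pcompose)
  define g where "g = lead_coeff F * 2 ^ ((s - 1) * degree F)"
  have "F \<noteq> 0" using dG by (auto simp: G_def)
  then have "g \<noteq> 0" by (simp add: g_def)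
  note G_top = top_coeffs_pcompose_cheb[OF s dG[unfolded G_def], folded G_def g_def]
  note Q_top = top_coeffs_pcompose_linear[OF dG G_top, of \<beta> \<alpha>, folded QG N_def]
  show thesis using that[OF \<open>g \<noteq> 0\<close> Q_top] .
qed

lemma Ch_conditions:
  fixes F :: "real poly" and s :: nat and \<alpha> \<beta> :: real
  defines "Q \<equiv> pcompose F (pcompose (cheb s) [:\<beta>, \<alpha>:])"
  defines "N \<equiv> real (degree Q)"
  assumes F: "degree F \<ge> 1" and s: "s \<ge> 5" and \<alpha>: "\<alpha> \<noteq> 0"
  shows "Ch 2 Q = 0 \<Longrightarrow> \<alpha>^2 = 1 - 2 * (N - 1) * \<beta>^2"
    and "Ch 3 Q = 0 \<Longrightarrow>
           2 * (N - 1) * (N - 2) * \<beta>^3 - 3 * (N - 2) * \<beta> + 3 * (N - 1) * \<alpha>^2 * \<beta> = 0"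
    and "Ch 2 Q = 0 \<Longrightarrow> Ch 4 Q = 0 \<Longrightarrow>
           4 * (N - 1) * (N - 2) * \<beta>^4 - 12 * (N - 2) * \<beta>^2 + 3 = 3 * \<alpha>^4"
proof -
  have "degree Q \<ge> 5" using degree_cheb_composition_ge[OF \<alpha> F, of s \<beta>] s by (simp add: Q_def)
  then obtain m where dQ: "degree Q = m + 5" by (metis le_add_diff_inverse2)
  have N: "N = real (m + 5)" by (simp add: N_def dQ)
  obtain g where g: "g \<noteq> 0"
    and q5: "coeff Q (m + 5) = g * \<alpha> ^ (m + 5)"
    and q4: "coeff Q (m + 4) = g * \<alpha> ^ (m + 4) * (N * \<beta>)"
    and q3: "coeff Q (m + 3) = g * \<alpha> ^ (m + 3) * (N * (N - 1) / 2 * \<beta>^2 - N / 4)"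
    and q2: "coeff Q (m + 2)
           = g * \<alpha> ^ (m + 2) * (N * (N - 1) * (N - 2) / 6 * \<beta>^3 - N * (N - 2) / 4 * \<beta>)"
    and q1: "coeff Q (m + 1) = g * \<alpha> ^ (m + 1) *
           (N * (N - 1) * (N - 2) * (N - 3) / 24 * \<beta>^4 - N * (N - 2) * (N - 3) / 8 * \<beta>^2
            + N * (N - 3) / 32)"
    using top_coeffs_cheb_composition[OF s \<alpha> dQ[unfolded Q_def]] unfolding Q_def[symmetric] N by blast
  note vanishing = Ch_vanishing[OF dQ, folded N]
  have N5: "N \<noteq> 0" "N - 3 \<noteq> 0" by (simp_all add: N)
  show "\<alpha>^2 = 1 - 2 * (N - 1) * \<beta>^2" if "Ch 2 Q = 0"
  proof -
    have "g * \<alpha> ^ (m + 3) * N * (\<alpha>^2 - (1 - 2 * (N - 1) * \<beta>^2))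
            = 4 * coeff Q (m + 3) + N * coeff Q (m + 5)"
      unfolding q3 q5 by (simp add: power_add field_simps; algebra)
    also have "\<dots> = 0" using vanishing(1)[OF that] by simp
    finally show ?thesis using g \<alpha> N5 by simp
  qed
  show "2 * (N - 1) * (N - 2) * \<beta>^3 - 3 * (N - 2) * \<beta> + 3 * (N - 1) * \<alpha>^2 * \<beta> = 0"
    if "Ch 3 Q = 0"
  proof -
    have "g * \<alpha> ^ (m + 2) * N *
            (2 * (N - 1) * (N - 2) * \<beta>^3 - 3 * (N - 2) * \<beta> + 3 * (N - 1) * \<alpha>^2 * \<beta>)
            = 3 * (4 * coeff Q (m + 2) + (N - 1) * coeff Q (m + 4))"
      unfolding q2 q4 by (simp add: power_add field_simps; algebra)
    also have "\<dots> = 0" using vanishing(2)[OF that] by simp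
    finally show ?thesis using g \<alpha> N5 by simp
  qed
  show "4 * (N - 1) * (N - 2) * \<beta>^4 - 12 * (N - 2) * \<beta>^2 + 3 = 3 * \<alpha>^4"
    if "Ch 2 Q = 0" and "Ch 4 Q = 0"
  proof -
    have "g * \<alpha> ^ (m + 1) * N * (N - 3) *
            (4 * (N - 1) * (N - 2) * \<beta>^4 - 12 * (N - 2) * \<beta>^2 + 3 - 3 * \<alpha>^4)
            = 3 * (32 * coeff Q (m + 1) - N * (N - 3) * coeff Q (m + 5))"
      unfolding q1 q5 by (simp add: power_add field_simps; algebra)
    also have "\<dots> = 0" using vanishing(3)[OF that] by simp
    finally show ?thesis using g \<alpha> N5 by simp
  qed
qed

(* Solving the system Ch_2 = Ch_3 = 0: after eliminating \<alpha>^2 the cubic condition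
   factors as \<beta> (3 - 2 (N-1)(2N-1) \<beta>^2) = 0. *)
lemma solutions_Ch2_Ch3:
  fixes N \<alpha> \<beta> :: real
  assumes N: "N > 1" and E2: "\<alpha>^2 = 1 - 2 * (N - 1) * \<beta>^2"
    and E3: "2 * (N - 1) * (N - 2) * \<beta>^3 - 3 * (N - 2) * \<beta> + 3 * (N - 1) * \<alpha>^2 * \<beta> = 0"
  shows "((\<alpha> = 1 \<or> \<alpha> = -1) \<and> \<beta> = 0) \<or>
         (4 * \<beta>^2 = 6 / ((N - 1) * (2 * N - 1)) \<and> \<alpha>^2 = (2 * N - 4) / (2 * N - 1))"
proof -
  have "\<beta> * (3 - 2 * (N - 1) * (2 * N - 1) * \<beta>^2)
          = 2 * (N - 1) * (N - 2) * \<beta>^3 - 3 * (N - 2) * \<beta> + 3 * (N - 1) * \<alpha>^2 * \<beta>"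
    unfolding E2 by (simp add: power2_eq_square power3_eq_cube algebra_simps)
  then consider "\<beta> = 0" | "2 * (N - 1) * (2 * N - 1) * \<beta>^2 = 3" using E3 by auto
  then show ?thesis
  proof cases
    case 1
    then show ?thesis using E2 by (simp add: power2_eq_1_iff)
  next
    case 2
    have pos: "(N - 1) * (2 * N - 1) > 0" using N by simp
    have "4 * \<beta>^2 = 6 / ((N - 1) * (2 * N - 1))"
      using 2 pos by (simp add: field_simps)
    moreover have "\<alpha>^2 = (2 * N - 4) / (2 * N - 1)"
    proof -
      have d: "2 * N - 1 > 0" using N by simp
      then have "2 * (N - 1) * \<beta>^2 = 3 / (2 * N - 1)" using 2 by (simp add: field_simps)
      then show ?thesis using d unfolding E2 by (simp add: field_simps)
    qed
    ultimately show ?thesis by blast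
  qed
qed

(* Solving the system Ch_2 = Ch_4 = 0: after eliminating \<alpha>^2 the quartic condition
   factors as \<beta>^2 (3 - (N-1)(2N-1) \<beta>^2) = 0. *)
lemma solutions_Ch2_Ch4:
  fixes N \<alpha> \<beta> :: real
  assumes N: "N > 1" and E2: "\<alpha>^2 = 1 - 2 * (N - 1) * \<beta>^2"
    and E4: "4 * (N - 1) * (N - 2) * \<beta>^4 - 12 * (N - 2) * \<beta>^2 + 3 = 3 * \<alpha>^4"
  shows "((\<alpha> = 1 \<or> \<alpha> = -1) \<and> \<beta> = 0) \<or>
         (4 * \<beta>^2 = 12 / ((N - 1) * (2 * N - 1)) \<and> \<alpha>^2 = (2 * N - 7) / (2 * N - 1))"
proof -
  have "\<alpha>^4 = (\<alpha>^2)^2" by simp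
  then have "4 * \<beta>^2 * (3 - (N - 1) * (2 * N - 1) * \<beta>^2)
          = 4 * (N - 1) * (N - 2) * \<beta>^4 - 12 * (N - 2) * \<beta>^2 + 3 - 3 * \<alpha>^4"
    unfolding E2 by (simp add: power2_eq_square power4_eq_xxxx algebra_simps)
  then consider "\<beta> = 0" | "(N - 1) * (2 * N - 1) * \<beta>^2 = 3" using E4 by auto
  then show ?thesis
  proof cases
    case 1
    then show ?thesis using E2 by (simp add: power2_eq_1_iff)
  next
    case 2
    have pos: "(N - 1) * (2 * N - 1) > 0" using N by simp
    have "4 * \<beta>^2 = 12 / ((N - 1) * (2 * N - 1))"
      using 2 pos by (simp add: field_simps)
    moreover have "\<alpha>^2 = (2 * N - 7) / (2 * N - 1)"
    proof -
      have d: "2 * N - 1 > 0" using N by simp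
      then have "2 * (N - 1) * \<beta>^2 = 6 / (2 * N - 1)" using 2 by (simp add: field_simps)
      then show ?thesis using d unfolding E2 by (simp add: field_simps)
    qed
    ultimately show ?thesis by blast
  qed
qed

lemma nontrivial_solution_bounds:
  fixes N \<alpha> \<beta> c k :: real
  assumes "N > 1" and "c > 0" and "k > 1"
    and "4 * \<beta>^2 = c / ((N - 1) * (2 * N - 1))" and "\<alpha>^2 = (2 * N - k) / (2 * N - 1)"
  shows "\<alpha>^2 < 1 \<and> \<beta> \<noteq> 0"
  using assms by (auto simp: divide_less_eq)

theorem lemma3p5:
  fixes F :: "real poly" and s :: nat and \<alpha> \<beta> :: real
  assumes "degree F \<ge> 1" and "s \<ge> 5" and "\<alpha> \<noteq> 0"
  defines "Q \<equiv> pcompose F (pcompose (cheb s) [:\<beta>, \<alpha>:])"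
  defines "n \<equiv> degree Q"
  shows "(Ch 2 Q = 0 \<and> Ch 3 Q = 0 \<longrightarrow>
            ((\<alpha> = 1 \<or> \<alpha> = -1) \<and> \<beta> = 0) \<or>
            (4 * \<beta>^2 = 6 / ((real n - 1) * (2 * real n - 1)) \<and>
             \<alpha>^2 = (2 * real n - 4) / (2 * real n - 1)))
       \<and> (Ch 2 Q = 0 \<and> Ch 4 Q = 0 \<longrightarrow>
            ((\<alpha> = 1 \<or> \<alpha> = -1) \<and> \<beta> = 0) \<or>
            (4 * \<beta>^2 = 12 / ((real n - 1) * (2 * real n - 1)) \<and>
             \<alpha>^2 = (2 * real n - 7) / (2 * real n - 1)))
       \<and> ((Ch 2 Q = 0 \<and> Ch 3 Q = 0) \<or> (Ch 2 Q = 0 \<and> Ch 4 Q = 0) \<longrightarrow>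
            ((\<alpha> = 1 \<or> \<alpha> = -1) \<and> \<beta> = 0) \<or> (\<alpha>^2 < 1 \<and> \<beta> \<noteq> 0))"
proof -
  have "n \<ge> 5" using degree_cheb_composition_ge[OF assms(3,1), of s \<beta>] assms(2)
    by (simp add: n_def Q_def)
  then have n: "real n > 1" by simp
  note E = Ch_conditions[OF assms(1-3), of \<beta>, folded Q_def n_def]
  have part1: "Ch 2 Q = 0 \<and> Ch 3 Q = 0 \<longrightarrow>
      ((\<alpha> = 1 \<or> \<alpha> = -1) \<and> \<beta> = 0) \<or>
      (4 * \<beta>^2 = 6 / ((real n - 1) * (2 * real n - 1)) \<and>
       \<alpha>^2 = (2 * real n - 4) / (2 * real n - 1))"
    using solutions_Ch2_Ch3[OF n E(1) E(2)] by blast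
  have part2: "Ch 2 Q = 0 \<and> Ch 4 Q = 0 \<longrightarrow>
      ((\<alpha> = 1 \<or> \<alpha> = -1) \<and> \<beta> = 0) \<or>
      (4 * \<beta>^2 = 12 / ((real n - 1) * (2 * real n - 1)) \<and>
       \<alpha>^2 = (2 * real n - 7) / (2 * real n - 1))"
    using solutions_Ch2_Ch4[OF n E(1) E(3)] by blast
  show ?thesis
    using part1 part2 nontrivial_solution_bounds[OF n, of 6 4 \<beta> \<alpha>]
      nontrivial_solution_bounds[OF n, of 12 7 \<beta> \<alpha>] by auto
qed

end
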